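(* Let $p>1$ and $k\ge2$. There exist $E>0$ and $C>0$ such that for all $\zeta_1<\zeta_2<\dots<\zeta_k$ with $\zeta_{j+1}-\zeta_j\ge E$ for $j=1,\dots,k-1$, all $\theta_1,\dots,\theta_k\in\mathbb R$, and all $i\in\{1,\dots,k\}$, $$\int_{-1}^1\kappa(d_i,y)\,|K(y)|^{p-2}\,dy\le C,\qquad\text{where } d_j=-\tanh\zeta_j,\quad K(y)=\sum_{j=1}^ke^{i\theta_j}\kappa(d_j,y).$$
   Context: $\kappa(d,y)=\kappa_0(1-d^2)^{\frac1{p-1}}(1+dy)^{-\frac2{p-1}}$ for $d,y\in(-1,1)$, with $\kappa_0=(\frac{2(p+1)}{(p-1)^2})^{\frac1{p-1}}$. (In the paper this is applied along the solution's modulation parameters, for $s$ large, when the soliton centers $\zeta_j(s)$ separate.) *)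

theory Defs
  imports "HOL-Analysis.Analysis"
begin

definition kappa0 :: "real \<Rightarrow> real" where
  "kappa0 p = (2 * (p + 1) / (p - 1)^2) powr (1 / (p - 1))"

definition kappa :: "real \<Rightarrow> real \<Rightarrow> real \<Rightarrow> real" where
  "kappa p d y = kappa0 p * (1 - d^2) powr (1 / (p - 1)) * (1 + d * y) powr (- 2 / (p - 1))"

definition epow :: "real \<Rightarrow> real \<Rightarrow> ennreal" where
  "epow x a = (if x = 0 then (if a < 0 then \<infinity> else if a = 0 then 1 else 0)
               else ennreal (x powr a))"

end

theory Submission
  imports Defs
begin

text \<open>Substituting y = tanh x turns kappa(d_j, y) into kappa0 * cosh x ^ a * sigma_j x with
  a = 2/(p-1) and the soliton sigma_j x = cosh (x - zeta_j) ^ (-a); the Jacobian 1 - y^2 = sech^2 x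
  absorbs the weight cosh x ^ (a (p-1)) = cosh^2 x, so the integral becomes
  kappa0^(p-1) times the integral over the real line of sigma_i |sum_j e^(i theta_j) sigma_j|^(p-2).

  For p >= 2 the modulus of the sum is at most k and sigma_i decays exponentially. For p < 2 the
  exponent -q = p - 2 is negative. Away from the midpoints of consecutive centres the nearest soliton
  dominates all others, so the modulus is at least half of it and the integrand is at most
  2 sigma_i^(1-q) = 2 sech^2 (x - zeta_i). In a window around the midpoint of zeta_m and zeta_(m+1),
  the projection of the sum divided by sigma_m onto the direction e^(i theta_(m+1)) has derivative
  bounded below, hence vanishes at most linearly at a single point x0, and the integrand is
  O(|x - x0|^(-q)), which is integrable.\<close>

section \<open>Soliton profiles\<close>

lemma cosh_le_exp_abs: "cosh (x::real) \<le> exp \<bar>x\<bar>"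
proof -
  have "exp x + exp (-x) \<le> 2 * exp \<bar>x\<bar>" by (smt (verit) exp_le_cancel_iff)
  thus ?thesis unfolding cosh_field_def by simp
qed

lemma exp_abs_le_two_cosh: "exp \<bar>x\<bar> \<le> 2 * cosh (x::real)"
proof -
  have "exp \<bar>x\<bar> \<le> exp x + exp (-x)"
    by (cases "x \<ge> 0") (auto simp: add_increasing add_increasing2)
  thus ?thesis unfolding cosh_field_def by simp
qed

lemma one_minus_tanh_sq: "1 - tanh (x::real) ^ 2 = 1 / cosh x ^ 2"
proof -
  have "sinh x ^ 2 = cosh x ^ 2 - 1" using cosh_square_eq[of x] by simp
  thus ?thesis unfolding tanh_def by (simp add: power_divide field_simps)
qed

lemma tanh_ge_half: "1 \<le> x \<Longrightarrow> 1/2 \<le> tanh (x::real)"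
proof -
  assume x: "1 \<le> x"
  have "exp (2::real) \<ge> 3" using exp_ge_add_one_self[of 2] by simp
  hence "exp (-2::real) \<le> 1/3" by (simp add: exp_minus field_simps)
  moreover have "1 + exp (-2::real) > 0" by (simp add: add_pos_pos)
  ultimately have "1/2 \<le> (1 - exp (-2::real)) / (1 + exp (-2))"
    by (simp add: le_divide_eq)
  hence "1/2 \<le> tanh (1::real)" unfolding tanh_real_altdef by simp
  also have "tanh 1 \<le> tanh x" using x by simp
  finally show ?thesis .
qed

definition soliton :: "real \<Rightarrow> real \<Rightarrow> real \<Rightarrow> real" where
  "soliton a z x = cosh (x - z) powr (-a)"

lemma soliton_pos: "0 < soliton a z x"
  unfolding soliton_def by simp

lemma soliton_le_1: "0 \<le> a \<Longrightarrow> soliton a z x \<le> 1"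
  unfolding soliton_def using cosh_real_ge_1[of "x - z"]
  by (simp add: powr_minus inverse_le_1_iff ge_one_powr_ge_zero)

lemma soliton_le_exp: "0 \<le> a \<Longrightarrow> soliton a z x \<le> 2 powr a * exp (-a * \<bar>x - z\<bar>)"
proof -
  assume a: "0 \<le> a"
  have "cosh (x - z) powr (-a) \<le> (exp \<bar>x - z\<bar> / 2) powr (-a)"
    using exp_abs_le_two_cosh[of "x - z"] a by (intro powr_mono2') auto
  also have "\<dots> = 2 powr a * exp (-a * \<bar>x - z\<bar>)"
    by (simp add: powr_def ln_div algebra_simps flip: exp_add)
  finally show ?thesis unfolding soliton_def .
qed

lemma exp_le_soliton: "0 \<le> a \<Longrightarrow> exp (-a * \<bar>x - z\<bar>) \<le> soliton a z x"
proof -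
  assume a: "0 \<le> a"
  have "exp (-a * \<bar>x - z\<bar>) = (exp \<bar>x - z\<bar>) powr (-a)" by (simp add: powr_def)
  also have "\<dots> \<le> cosh (x - z) powr (-a)"
    using cosh_le_exp_abs[of "x - z"] a by (intro powr_mono2') auto
  finally show ?thesis unfolding soliton_def .
qed

lemma soliton_le_if_farther:
  assumes "0 \<le> a" "\<bar>x - zm\<bar> + D \<le> \<bar>x - zj\<bar>"
  shows "soliton a zj x \<le> 2 powr a * exp (-a * D) * soliton a zm x"
proof -
  have "soliton a zj x \<le> 2 powr a * exp (-a * \<bar>x - zj\<bar>)" by (rule soliton_le_exp[OF assms(1)])
  also have "\<dots> \<le> 2 powr a * (exp (-a * D) * exp (-a * \<bar>x - zm\<bar>))"
    using mult_left_mono[OF assms(2,1)] by (auto simp flip: exp_add simp: algebra_simps)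
  also have "\<dots> \<le> 2 powr a * (exp (-a * D) * soliton a zm x)"
    by (intro mult_left_mono exp_le_soliton assms) auto
  finally show ?thesis by (simp add: mult.assoc)
qed

lemma soliton_ge_if_nearer:
  assumes "0 \<le> a" "\<bar>x - zj\<bar> \<le> \<bar>x - zm\<bar> + D"
  shows "exp (-a * D) / 2 powr a * soliton a zm x \<le> soliton a zj x"
proof -
  have "exp (-a * D) / 2 powr a * soliton a zm x
      \<le> exp (-a * D) / 2 powr a * (2 powr a * exp (-a * \<bar>x - zm\<bar>))"
    by (intro mult_left_mono soliton_le_exp assms) auto
  also have "\<dots> = exp (-a * (\<bar>x - zm\<bar> + D))" by (simp add: algebra_simps flip: exp_add)
  also have "\<dots> \<le> exp (-a * \<bar>x - zj\<bar>)" using assms by (auto intro!: mult_left_mono)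
  also have "\<dots> \<le> soliton a zj x" by (rule exp_le_soliton[OF assms(1)])
  finally show ?thesis .
qed

lemma soliton_has_real_derivative:
  "(soliton a z has_real_derivative (- a * tanh (x - z) * soliton a z x)) (at x)"
proof -
  have "soliton a z = (\<lambda>x. exp (-a * ln (cosh (x - z))))"
    by (auto simp: soliton_def powr_def fun_eq_iff)
  thus ?thesis by (auto intro!: derivative_eq_intros simp: tanh_def field_simps)
qed

lemma soliton_powr_eq_sech_sq:
  assumes "a * (1 - q) = 2"
  shows "soliton a z x powr (1 - q) = 1 / cosh (x - z) ^ 2"
proof -
  have "soliton a z x powr (1 - q) = cosh (x - z) powr (-2)"
    using assms unfolding soliton_def by (simp add: powr_powr)
  thus ?thesis by (simp add: powr_minus powr_numeral divide_inverse)
qed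

lemma soliton_le_sech_sq:
  assumes a: "0 < a"
  shows "soliton a z x \<le> 2 powr a * (1 / cosh ((a/2) * (x - z)) ^ 2)"
proof -
  let ?v = "(a/2) * (x - z)"
  have "cosh ?v ^ 2 \<le> exp \<bar>?v\<bar> ^ 2" by (intro power_mono cosh_le_exp_abs) auto
  also have "\<dots> = exp (a * \<bar>x - z\<bar>)"
    using a by (simp add: abs_mult power2_eq_square flip: exp_add)
  finally have "exp (-a * \<bar>x - z\<bar>) \<le> 1 / cosh ?v ^ 2"
    by (simp add: exp_minus inverse_eq_divide divide_left_mono)
  hence "2 powr a * exp (-a * \<bar>x - z\<bar>) \<le> 2 powr a * (1 / cosh ?v ^ 2)"
    by (intro mult_left_mono) auto
  with soliton_le_exp[of a z x] a show ?thesis by simp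
qed

lemma measurable_soliton [measurable]:
  "f \<in> borel_measurable M \<Longrightarrow> (\<lambda>x. soliton a z (f x)) \<in> borel_measurable M"
proof -
  have "soliton a z \<in> borel_measurable borel"
    unfolding soliton_def by (intro borel_measurable_continuous_onI continuous_intros) auto
  thus "f \<in> borel_measurable M \<Longrightarrow> (\<lambda>x. soliton a z (f x)) \<in> borel_measurable M"
    using measurable_compose by blast
qed

lemma measurable_epow [measurable]:
  assumes [measurable]: "f \<in> borel_measurable M"
  shows "(\<lambda>x. epow (f x) b) \<in> borel_measurable M"
proof -
  have "{x \<in> space M. f x = 0} \<in> sets M" by measurable
  moreover have "(\<lambda>x. ennreal (f x powr b)) \<in> borel_measurable M" by measurable
  ultimately show ?thesis unfolding epow_def by (intro measurable_If) auto
qed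

lemma epow_mult:
  assumes c: "0 < c" and t: "0 \<le> t"
  shows "epow (c * t) b = ennreal (c powr b) * epow t b"
proof (cases "t = 0")
  case True
  have "ennreal (c powr b) \<noteq> 0" using c by simp
  thus ?thesis using True c by (simp add: epow_def ennreal_mult_top)
next
  case False
  thus ?thesis using c t by (simp add: epow_def powr_mult ennreal_mult)
qed

definition soliton_sum :: "real \<Rightarrow> (nat \<Rightarrow> real) \<Rightarrow> (nat \<Rightarrow> real) \<Rightarrow> nat \<Rightarrow> real \<Rightarrow> complex" where
  "soliton_sum a Z \<theta> k x = (\<Sum>j=1..k. cis (\<theta> j) * complex_of_real (soliton a (Z j) x))"

lemma measurable_soliton_sum [measurable]:
  "f \<in> borel_measurable M \<Longrightarrow> (\<lambda>x. soliton_sum a Z \<theta> k (f x)) \<in> borel_measurable M"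
  unfolding soliton_sum_def by measurable

lemma norm_soliton_sum_le: "0 \<le> a \<Longrightarrow> cmod (soliton_sum a Z \<theta> k x) \<le> real k"
proof -
  assume a: "0 \<le> a"
  have "cmod (soliton_sum a Z \<theta> k x) \<le> (\<Sum>j=1..k. cmod (cis (\<theta> j) * complex_of_real (soliton a (Z j) x)))"
    unfolding soliton_sum_def by (rule norm_sum)
  also have "\<dots> = (\<Sum>j=1..k. soliton a (Z j) x)"
    by (intro sum.cong refl) (simp add: norm_mult abs_of_pos soliton_pos)
  also have "\<dots> \<le> (\<Sum>j=1..k. 1)" by (intro sum_mono soliton_le_1 a)
  finally show ?thesis by simp
qed

definition soliton_integrand ::
    "real \<Rightarrow> real \<Rightarrow> (nat \<Rightarrow> real) \<Rightarrow> (nat \<Rightarrow> real) \<Rightarrow> nat \<Rightarrow> nat \<Rightarrow> real \<Rightarrow> ennreal" where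
  "soliton_integrand a b Z \<theta> k i x = ennreal (soliton a (Z i) x) * epow (cmod (soliton_sum a Z \<theta> k x)) b"

definition soliton_integral ::
    "real \<Rightarrow> real \<Rightarrow> (nat \<Rightarrow> real) \<Rightarrow> (nat \<Rightarrow> real) \<Rightarrow> nat \<Rightarrow> nat \<Rightarrow> ennreal" where
  "soliton_integral a b Z \<theta> k i = (\<integral>\<^sup>+x. soliton_integrand a b Z \<theta> k i x \<partial>lborel)"

lemma measurable_soliton_integrand [measurable]:
  "soliton_integrand a b Z \<theta> k i \<in> borel_measurable borel"
  unfolding soliton_integrand_def[abs_def] by measurable

section \<open>Separated centres\<close>

definition separated :: "(nat \<Rightarrow> real) \<Rightarrow> nat \<Rightarrow> real \<Rightarrow> bool" where
  "separated Z k E \<longleftrightarrow> (\<forall>l j. 1 \<le> l \<longrightarrow> l < j \<longrightarrow> j \<le> k \<longrightarrow> E \<le> Z j - Z l)"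

lemma separatedI:
  assumes gaps: "\<forall>j\<in>{1..<k}. E \<le> Z (Suc j) - Z j" and E: "0 \<le> E"
  shows "separated Z k E"
proof -
  have "1 \<le> l \<longrightarrow> l < j \<longrightarrow> j \<le> k \<longrightarrow> E \<le> Z j - Z l" for l j
  proof (induction j)
    case (Suc j)
    show ?case
    proof (intro impI)
      assume j: "1 \<le> l" "l < Suc j" "Suc j \<le> k"
      have "E \<le> Z (Suc j) - Z j" using gaps j by auto
      moreover have "l \<noteq> j \<Longrightarrow> E \<le> Z j - Z l" using Suc j by auto
      ultimately show "E \<le> Z (Suc j) - Z l" using E by (cases "l = j") auto
    qed
  qed simp
  thus ?thesis unfolding separated_def by blast
qed

lemma separated_mono:
  assumes "separated Z k E" "0 \<le> E" "1 \<le> l" "l \<le> j" "j \<le> k"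
  shows "Z l \<le> Z j"
proof (cases "l = j")
  case False
  hence "E \<le> Z j - Z l" using assms unfolding separated_def by auto
  thus ?thesis using assms by linarith
qed simp

lemma separated_nearest_center:
  assumes sep: "separated Z k E" and k: "1 \<le> k" and L: "0 < L" "2 * L \<le> E"
    and far: "\<And>m. 1 \<le> m \<Longrightarrow> m < k \<Longrightarrow> L \<le> \<bar>x - (Z m + Z (Suc m)) / 2\<bar>"
  obtains m where "m \<in> {1..k}" "\<And>j. j \<in> {1..k} \<Longrightarrow> j \<noteq> m \<Longrightarrow> \<bar>x - Z m\<bar> + 2 * L \<le> \<bar>x - Z j\<bar>"
proof -
  let ?d = "\<lambda>j. \<bar>x - Z j\<bar>"
  have fin: "finite (?d ` {1..k})" "?d ` {1..k} \<noteq> {}" using k by auto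
  obtain m where m: "m \<in> {1..k}" "?d m = Min (?d ` {1..k})" using Min_in[OF fin] by auto
  have nearest: "?d m \<le> ?d j" if "j \<in> {1..k}" for j using m that fin by auto
  have E: "0 \<le> E" using L by linarith
  have "?d m + 2 * L \<le> ?d j" if j: "j \<in> {1..k}" "j \<noteq> m" for j
  proof (cases "m < j")
    case True
    have "E \<le> Z (Suc m) - Z m" using sep True j m unfolding separated_def by auto
    moreover have "Z (Suc m) \<le> Z j" using separated_mono[OF sep E, of "Suc m" j] True j by auto
    moreover have "?d m \<le> ?d (Suc m)" using nearest[of "Suc m"] True j by auto
    moreover have "L \<le> \<bar>x - (Z m + Z (Suc m)) / 2\<bar>" using far[of m] True j m by auto
    ultimately show ?thesis using L by (smt (z3) field_sum_of_halves)
  next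
    case False
    then obtain m' where m': "m = Suc m'" "j \<le> m'" using j by (cases m) auto
    have "E \<le> Z m - Z m'" using sep j m m' unfolding separated_def by auto
    moreover have "Z j \<le> Z m'" using separated_mono[OF sep E, of j m'] j m m' by auto
    moreover have "?d m \<le> ?d m'" using nearest[of m'] j m m' by auto
    moreover have "L \<le> \<bar>x - (Z m' + Z m) / 2\<bar>" using far[of m'] j m m' by auto
    ultimately show ?thesis using L by (smt (z3) field_sum_of_halves)
  qed
  thus ?thesis using m that by blast
qed

lemma separated_window:
  assumes sep: "separated Z k E" and m: "1 \<le> m" "m < k" and L: "0 < L" "2 * L + 2 \<le> E"
    and x: "\<bar>x - (Z m + Z (Suc m)) / 2\<bar> \<le> L"
  shows "1 \<le> x - Z m" "1 \<le> Z (Suc m) - x"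
    "\<bar>x - Z (Suc m)\<bar> \<le> \<bar>x - Z m\<bar> + 2 * L"
    "\<And>j. j \<in> {1..k} \<Longrightarrow> \<bar>x - Z m\<bar> + - (2 * L) \<le> \<bar>x - Z j\<bar>"
    "\<And>j. j \<in> {1..k} \<Longrightarrow> j \<noteq> m \<Longrightarrow> j \<noteq> Suc m \<Longrightarrow> \<bar>x - Z m\<bar> + (E - 2 * L) \<le> \<bar>x - Z j\<bar>"
proof -
  have E: "0 \<le> E" using L by linarith
  have gap: "E \<le> Z (Suc m) - Z m" using sep m unfolding separated_def by auto
  show left: "1 \<le> x - Z m" and right: "1 \<le> Z (Suc m) - x"
    using gap x L by (smt (z3) field_sum_of_halves)+
  show "\<bar>x - Z (Suc m)\<bar> \<le> \<bar>x - Z m\<bar> + 2 * L"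
    using left right x by (smt (z3) field_sum_of_halves)
  show "\<bar>x - Z m\<bar> + - (2 * L) \<le> \<bar>x - Z j\<bar>" if j: "j \<in> {1..k}" for j
  proof (cases "m < j")
    case True
    hence "Z (Suc m) \<le> Z j" using separated_mono[OF sep E, of "Suc m" j] j by auto
    thus ?thesis using left right x by (smt (z3) field_sum_of_halves)
  next
    case False
    hence "Z j \<le> Z m" using separated_mono[OF sep E, of j m] j m by auto
    thus ?thesis using left right x by (smt (z3) field_sum_of_halves)
  qed
  show "\<bar>x - Z m\<bar> + (E - 2 * L) \<le> \<bar>x - Z j\<bar>" if j: "j \<in> {1..k}" "j \<noteq> m" "j \<noteq> Suc m" for j
  proof (cases "m < j")
    case True
    hence "E \<le> Z j - Z (Suc m)" using sep j unfolding separated_def by auto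
    thus ?thesis using left right x by (smt (z3) field_sum_of_halves)
  next
    case False
    hence "E \<le> Z m - Z j" using sep j m unfolding separated_def by auto
    thus ?thesis using left right x L by (smt (z3) field_sum_of_halves)
  qed
qed

lemma increment_ge_if_deriv_ge:
  assumes deriv: "\<And>t. lo \<le> t \<Longrightarrow> t \<le> hi \<Longrightarrow> (g has_real_derivative g' t) (at t)"
    and slope: "\<And>t. lo \<le> t \<Longrightarrow> t \<le> hi \<Longrightarrow> \<delta> \<le> g' t"
    and xy: "lo \<le> x" "x \<le> y" "y \<le> hi"
  shows "\<delta> * (y - x) \<le> g y - g x"
proof -
  have "g x - \<delta> * x \<le> g y - \<delta> * y"
  proof (rule deriv_nonneg_imp_mono[of x y "\<lambda>t. g t - \<delta> * t" "\<lambda>t. g' t - \<delta>"])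
    fix t assume t: "t \<in> {x..y}"
    show "((\<lambda>t. g t - \<delta> * t) has_real_derivative g' t - \<delta>) (at t)"
      using deriv[of t] t xy by (auto intro!: derivative_eq_intros)
    show "0 \<le> g' t - \<delta>" using slope[of t] t xy by auto
  qed (use xy in auto)
  thus ?thesis by (simp add: algebra_simps)
qed

text \<open>The point is a zero of g if g changes sign on the interval, otherwise an endpoint.\<close>

lemma abs_ge_dist_if_increment_ge:
  fixes g :: "real \<Rightarrow> real"
  assumes lh: "lo \<le> hi" and cont: "continuous_on {lo..hi} g" and \<delta>: "0 \<le> \<delta>"
    and inc: "\<And>x y. lo \<le> x \<Longrightarrow> x \<le> y \<Longrightarrow> y \<le> hi \<Longrightarrow> \<delta> * (y - x) \<le> g y - g x"
  obtains x0 where "x0 \<in> {lo..hi}" "\<And>x. x \<in> {lo..hi} \<Longrightarrow> \<delta> * \<bar>x - x0\<bar> \<le> \<bar>g x\<bar>"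
proof -
  consider "0 \<le> g lo" | "g hi \<le> 0" | "g lo < 0" "0 < g hi" by linarith
  then obtain x0 where x0: "x0 \<in> {lo..hi}"
    and sign: "x0 < hi \<Longrightarrow> 0 \<le> g x0" "lo < x0 \<Longrightarrow> g x0 \<le> 0"
  proof cases
    case 3
    then obtain x0 where "lo \<le> x0" "x0 \<le> hi" "g x0 = 0" using IVT'[of g lo 0 hi] lh cont by auto
    thus ?thesis using that by auto
  qed (use lh that in auto)
  have "\<delta> * \<bar>x - x0\<bar> \<le> \<bar>g x\<bar>" if x: "x \<in> {lo..hi}" for x
  proof (cases x0 x rule: linorder_cases)
    case less
    have "\<delta> * (x - x0) \<le> g x - g x0" using inc[of x0 x] x x0 less by auto
    moreover have "0 \<le> g x0" using sign less x by auto
    ultimately show ?thesis using less by (auto simp: abs_if)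
  next
    case greater
    have "\<delta> * (x0 - x) \<le> g x0 - g x" using inc[of x x0] x x0 greater by auto
    moreover have "g x0 \<le> 0" using sign greater x by auto
    moreover have "0 \<le> \<delta> * (x0 - x)" using greater \<delta> by auto
    ultimately show ?thesis using greater by (auto simp: abs_if)
  qed simp
  thus ?thesis using x0 that by blast
qed

section \<open>Integrals on the real line\<close>

lemma nn_integral_indicator_Union_incseq:
  fixes F :: "real \<Rightarrow> ennreal"
  assumes mono: "\<And>n. A n \<subseteq> A (Suc n)" and [measurable]: "F \<in> borel_measurable borel"
    and [measurable]: "\<And>n. A n \<in> sets borel"
  shows "(\<integral>\<^sup>+x. F x * indicator (\<Union>n. A n) x \<partial>lborel) = (SUP n. \<integral>\<^sup>+x. F x * indicator (A n) x \<partial>lborel)"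
proof -
  have "(SUP n. F x * indicator (A n) x) = F x * indicator (\<Union>n. A n) x" for x
  proof (cases "x \<in> (\<Union>n. A n)")
    case True
    then obtain n0 where "x \<in> A n0" by auto
    hence "F x \<le> (SUP n. F x * indicator (A n) x)" by (intro SUP_upper2[of n0]) auto
    moreover have "(SUP n. F x * indicator (A n) x) \<le> F x"
      by (intro SUP_least) (auto simp: indicator_def)
    ultimately show ?thesis using True by (auto intro: antisym)
  qed (auto simp: indicator_def)
  hence "(\<integral>\<^sup>+x. F x * indicator (\<Union>n. A n) x \<partial>lborel) = (\<integral>\<^sup>+x. (SUP n. F x * indicator (A n) x) \<partial>lborel)"
    by simp
  also have "\<dots> = (SUP n. \<integral>\<^sup>+x. F x * indicator (A n) x \<partial>lborel)"
  proof (rule nn_integral_monotone_convergence_SUP)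
    show "incseq (\<lambda>n x. F x * indicator (A n) x)"
      using mono by (intro incseq_SucI le_funI mult_left_mono) (auto simp: indicator_def)
  qed measurable
  finally show ?thesis .
qed

lemma measurable_cosh [measurable]:
  "f \<in> borel_measurable M \<Longrightarrow> (\<lambda>x. cosh (f x :: real)) \<in> borel_measurable M"
  using measurable_compose[OF _ borel_measurable_continuous_onI[OF continuous_on_cosh[OF continuous_on_id]]]
  by blast

lemma measurable_tanh [measurable]:
  "f \<in> borel_measurable M \<Longrightarrow> (\<lambda>x. tanh (f x :: real)) \<in> borel_measurable M"
proof -
  have "(tanh :: real \<Rightarrow> real) \<in> borel_measurable borel"
    by (intro borel_measurable_continuous_onI continuous_intros) auto
  thus "f \<in> borel_measurable M \<Longrightarrow> (\<lambda>x. tanh (f x)) \<in> borel_measurable M"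
    using measurable_compose by blast
qed

lemma tanh_artanh_real: "y \<in> {-1<..<1} \<Longrightarrow> tanh (artanh y) = (y::real)"
proof -
  assume y: "y \<in> {-1<..<1}"
  have "exp (-2 * artanh y) = (1 - y) / (1 + y)"
    unfolding artanh_def using y by (simp add: exp_minus)
  hence "tanh (artanh y) = (1 - (1 - y) / (1 + y)) / (1 + (1 - y) / (1 + y))"
    by (simp only: tanh_real_altdef)
  also have "\<dots> = y" using y by (simp add: field_simps)
  finally show ?thesis .
qed

lemma Union_tanh_Icc: "(\<Union>n. {tanh (-real (Suc n))..tanh (real (Suc n))}) = {-1<..<1::real}"
proof
  show "(\<Union>n. {tanh (-real (Suc n))..tanh (real (Suc n))}) \<subseteq> {-1<..<1::real}"
  proof
    fix y assume "y \<in> (\<Union>n. {tanh (-real (Suc n))..tanh (real (Suc n))})"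
    then obtain n where "y \<in> {tanh (-real (Suc n))..tanh (real (Suc n))}" by auto
    moreover have "-1 < tanh (-real (Suc n))" "tanh (real (Suc n)) < 1"
      by (rule tanh_real_gt_neg1, rule tanh_real_lt_1)
    ultimately show "y \<in> {-1<..<1}" by auto
  qed
  show "{-1<..<1} \<subseteq> (\<Union>n. {tanh (-real (Suc n))..tanh (real (Suc n))})"
  proof
    fix y :: real assume y: "y \<in> {-1<..<1}"
    obtain n where "\<bar>artanh y\<bar> \<le> real n" using real_arch_simple by blast
    hence "tanh (-real (Suc n)) \<le> tanh (artanh y)" "tanh (artanh y) \<le> tanh (real (Suc n))"
      by (auto simp del: tanh_minus)
    thus "y \<in> (\<Union>n. {tanh (-real (Suc n))..tanh (real (Suc n))})"
      unfolding tanh_artanh_real[OF y] by auto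
  qed
qed

lemma Union_symmetric_Icc: "(\<Union>n. {-real (Suc n)..real (Suc n)}) = (UNIV :: real set)"
proof -
  have "x \<in> (\<Union>n. {-real (Suc n)..real (Suc n)})" for x :: real
  proof -
    obtain n where "\<bar>x\<bar> \<le> real n" using real_arch_simple by blast
    thus ?thesis by (auto intro!: exI[of _ n])
  qed
  thus ?thesis by auto
qed

lemma nn_integral_tanh_substitution:
  fixes f :: "real \<Rightarrow> ennreal"
  assumes [measurable]: "f \<in> borel_measurable borel"
  shows "(\<integral>\<^sup>+y. indicator {-1<..<1} y * f y \<partial>lborel)
       = (\<integral>\<^sup>+x. f (tanh x) * ennreal (1 - tanh x ^ 2) \<partial>lborel)"
proof -
  define A where "A n = {tanh (-real (Suc n))..tanh (real (Suc n))}" for n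
  define B where "B n = {-real (Suc n)..real (Suc n)}" for n
  have UA: "(\<Union>n. A n) = {-1<..<1}" and UB: "(\<Union>n. B n) = UNIV"
    unfolding A_def B_def by (rule Union_tanh_Icc, rule Union_symmetric_Icc)
  have mono: "A n \<subseteq> A (Suc n)" "B n \<subseteq> B (Suc n)" for n
    unfolding A_def B_def by (auto simp del: tanh_minus)
  have subst: "(\<integral>\<^sup>+y. f y * indicator (A n) y \<partial>lborel) =
      (\<integral>\<^sup>+x. f (tanh x) * ennreal (1 - tanh x ^ 2) * indicator (B n) x \<partial>lborel)" for n
    unfolding A_def B_def
  proof (rule nn_integral_substitution_aux)
    show "(tanh has_real_derivative 1 - tanh x ^ 2) (at x)" for x
      by (auto intro!: derivative_eq_intros)
    show "0 \<le> 1 - tanh x ^ 2" for x :: real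
      by (simp add: one_minus_tanh_sq)
  qed (auto intro!: continuous_intros)
  have "(\<integral>\<^sup>+y. indicator {-1<..<1} y * f y \<partial>lborel) = (\<integral>\<^sup>+y. f y * indicator (\<Union>n. A n) y \<partial>lborel)"
    by (simp add: UA mult.commute)
  also have "\<dots> = (SUP n. \<integral>\<^sup>+y. f y * indicator (A n) y \<partial>lborel)"
    by (rule nn_integral_indicator_Union_incseq[where A = A, OF mono(1)]) (auto simp: A_def)
  also have "\<dots> = (SUP n. \<integral>\<^sup>+x. f (tanh x) * ennreal (1 - tanh x ^ 2) * indicator (B n) x \<partial>lborel)"
    by (simp add: subst)
  also have "\<dots> = (\<integral>\<^sup>+x. f (tanh x) * ennreal (1 - tanh x ^ 2) * indicator (\<Union>n. B n) x \<partial>lborel)"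
    by (rule nn_integral_indicator_Union_incseq[where A = B, OF mono(2), symmetric]) (auto simp: B_def)
  finally show ?thesis by (simp add: UB)
qed

lemma nn_integral_sech_sq: "(\<integral>\<^sup>+x. ennreal (1 / cosh x ^ 2) \<partial>lborel) = 2"
proof -
  have "(\<integral>\<^sup>+x. ennreal (1 / cosh x ^ 2) \<partial>lborel) = (\<integral>\<^sup>+x. 1 * ennreal (1 - tanh x ^ 2) \<partial>lborel)"
    by (simp add: one_minus_tanh_sq)
  also have "\<dots> = (\<integral>\<^sup>+y. indicator {-1<..<(1::real)} y * 1 \<partial>lborel)"
    using nn_integral_tanh_substitution[of "\<lambda>_. 1"] by simp
  also have "\<dots> = emeasure lborel {-1<..<(1::real)}" by simp
  finally show ?thesis by simp
qed

lemma nn_integral_sech_sq_scaled: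
  assumes c: "0 < c"
  shows "(\<integral>\<^sup>+x. ennreal (1 / cosh (c * (x - z)) ^ 2) \<partial>lborel) = ennreal (2 / c)"
proof -
  let ?I = "\<integral>\<^sup>+x. ennreal (1 / cosh (c * (x - z)) ^ 2) \<partial>lborel"
  have "(\<integral>\<^sup>+x. ennreal (1 / cosh x ^ 2) \<partial>lborel) = ennreal c * ?I"
    using nn_integral_real_affine[where f = "\<lambda>x. ennreal (1 / cosh x ^ 2)" and c = c and t = "- c * z"] c
    by (simp add: algebra_simps)
  hence "ennreal 2 = ennreal c * ?I" by (simp add: nn_integral_sech_sq)
  hence "ennreal (1 / c) * ennreal 2 = (ennreal (1 / c) * ennreal c) * ?I" by (simp add: mult.assoc)
  thus ?thesis using c ennreal_mult[of "1 / c" 2] by (simp flip: ennreal_mult)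
qed

lemma nn_integral_powr_Icc_0:
  assumes "0 < q" "q < 1" "0 \<le> R"
  shows "(\<integral>\<^sup>+t. ennreal (t powr (-q)) * indicator {0..R} t \<partial>lborel) = ennreal (R powr (1 - q) / (1 - q))"
proof -
  have "((\<lambda>x. x powr (-q)) has_integral (R powr (-q + 1) / (-q + 1))) {0..R}"
    using assms by (intro has_integral_powr_from_0) auto
  hence "(\<integral>\<^sup>+t. ennreal (t powr (-q)) * indicator {0..R} t \<partial>lborel) = ennreal (R powr (-q + 1) / (-q + 1))"
    by (intro nn_integral_has_integral_lebesgue') auto
  thus ?thesis by (simp add: add.commute)
qed

lemma nn_integral_epow_window:
  assumes q: "0 < q" "q < 1" and R: "0 \<le> R"
  shows "(\<integral>\<^sup>+x. indicator {c - R..c + R} x * epow \<bar>x - c\<bar> (-q) \<partial>lborel) \<le> ennreal (2 * (R powr (1 - q) / (1 - q)))"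
proof -
  define f where "f t = ennreal (t powr (-q)) * indicator {0..R} t" for t :: real
  have [measurable]: "f \<in> borel_measurable borel" unfolding f_def by measurable
  have I: "(\<integral>\<^sup>+t. f t \<partial>lborel) = ennreal (R powr (1 - q) / (1 - q))"
    unfolding f_def by (rule nn_integral_powr_Icc_0[OF q R])
  have right: "(\<integral>\<^sup>+x. f (x - c) \<partial>lborel) = (\<integral>\<^sup>+t. f t \<partial>lborel)"
    using nn_integral_real_affine[of f 1 "-c"] by simp
  have left: "(\<integral>\<^sup>+x. f (c - x) \<partial>lborel) = (\<integral>\<^sup>+t. f t \<partial>lborel)"
    using nn_integral_real_affine[of f "-1" c] by simp
  have "AE x in lborel. indicator {c - R..c + R} x * epow \<bar>x - c\<bar> (-q) \<le> f (x - c) + f (c - x)"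
    using AE_lborel_singleton[of c]
  proof eventually_elim
    case (elim x)
    hence "epow \<bar>x - c\<bar> (-q) = ennreal (\<bar>x - c\<bar> powr (-q))" by (simp add: epow_def)
    thus ?case using elim R unfolding f_def
      by (cases "c < x") (auto simp: indicator_def mult.commute add_increasing add_increasing2)
  qed
  hence "(\<integral>\<^sup>+x. indicator {c - R..c + R} x * epow \<bar>x - c\<bar> (-q) \<partial>lborel)
      \<le> (\<integral>\<^sup>+x. f (x - c) + f (c - x) \<partial>lborel)"
    by (rule nn_integral_mono_AE)
  also have "\<dots> = (\<integral>\<^sup>+x. f (x - c) \<partial>lborel) + (\<integral>\<^sup>+x. f (c - x) \<partial>lborel)"
    by (rule nn_integral_add) auto
  also have "\<dots> = ennreal (2 * (R powr (1 - q) / (1 - q)))"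
    using q R by (simp add: left right I flip: ennreal_plus)
  finally show ?thesis .
qed

lemma soliton_integral_le_of_nonneg:
  assumes a: "0 < a" and b: "0 \<le> b" and k: "1 \<le> k"
  shows "soliton_integral a b Z \<theta> k i \<le> ennreal (real k powr b * 2 powr a * (4 / a))"
proof -
  have "epow (cmod (soliton_sum a Z \<theta> k x)) b \<le> ennreal (real k powr b)" for x
    using norm_soliton_sum_le[of a Z \<theta> k x] a b k
    by (auto simp: epow_def intro!: ennreal_leI powr_mono2)
  hence "ennreal (soliton a (Z i) x) * epow (cmod (soliton_sum a Z \<theta> k x)) b
      \<le> ennreal (2 powr a * (1 / cosh ((a / 2) * (x - Z i)) ^ 2)) * ennreal (real k powr b)" for x
    using soliton_le_sech_sq[OF a, of "Z i" x] by (intro mult_mono ennreal_leI) auto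
  also have "ennreal (2 powr a * (1 / cosh ((a / 2) * (x - Z i)) ^ 2)) * ennreal (real k powr b)
      = ennreal (real k powr b * 2 powr a) * ennreal (1 / cosh ((a / 2) * (x - Z i)) ^ 2)" for x
    by (simp add: ennreal_mult[symmetric] mult_ac)
  finally have "ennreal (soliton a (Z i) x) * epow (cmod (soliton_sum a Z \<theta> k x)) b
      \<le> ennreal (real k powr b * 2 powr a) * ennreal (1 / cosh ((a / 2) * (x - Z i)) ^ 2)" for x .
  hence "soliton_integral a b Z \<theta> k i
      \<le> (\<integral>\<^sup>+x. ennreal (real k powr b * 2 powr a) * ennreal (1 / cosh ((a / 2) * (x - Z i)) ^ 2) \<partial>lborel)"
    unfolding soliton_integral_def soliton_integrand_def by (intro nn_integral_mono)
  also have "\<dots> = ennreal (real k powr b * 2 powr a) * ennreal (2 / (a / 2))"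
    using nn_integral_sech_sq_scaled[of "a / 2" "Z i"] a by (simp add: nn_integral_cmult)
  also have "\<dots> = ennreal (real k powr b * 2 powr a * (4 / a))"
    using a by (simp flip: ennreal_mult)
  finally show ?thesis .
qed

section \<open>Lower bounds for the superposition when 1 < p < 2\<close>

lemma dominant_term_bound:
  fixes s \<theta> :: "nat \<Rightarrow> real"
  assumes fin: "finite J" and m: "m \<in> J" and i: "i \<in> J" and nonneg: "\<forall>j\<in>J. 0 \<le> s j"
    and pos: "0 < s m" and dominant: "2 * (\<Sum>j\<in>J - {m}. s j) \<le> s m" and q: "0 < q" "q < 1"
  shows "ennreal (s i) * epow (cmod (\<Sum>j\<in>J. cis (\<theta> j) * complex_of_real (s j))) (-q)
         \<le> ennreal (2 * s i powr (1 - q))"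
proof -
  let ?S = "\<Sum>j\<in>J. cis (\<theta> j) * complex_of_real (s j)"
  let ?R = "\<Sum>j\<in>J - {m}. cis (\<theta> j) * complex_of_real (s j)"
  have "cmod ?R \<le> (\<Sum>j\<in>J - {m}. cmod (cis (\<theta> j) * complex_of_real (s j)))" by (rule norm_sum)
  also have "\<dots> = (\<Sum>j\<in>J - {m}. s j)" using nonneg by (intro sum.cong) (auto simp: norm_mult)
  finally have R: "cmod ?R \<le> (\<Sum>j\<in>J - {m}. s j)" .
  have "?S = cis (\<theta> m) * complex_of_real (s m) + ?R" using fin m by (simp add: sum.remove)
  hence "cmod (cis (\<theta> m) * complex_of_real (s m)) - cmod (- ?R) \<le> cmod ?S"
    using norm_diff_ineq[of "cis (\<theta> m) * complex_of_real (s m)" "?R"] by simp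
  hence S: "s m / 2 \<le> cmod ?S" using R dominant pos by (simp add: norm_mult)
  have "s i \<le> s m"
  proof (cases "i = m")
    case False
    hence "s i \<le> (\<Sum>j\<in>J - {m}. s j)" using fin i nonneg by (intro member_le_sum) auto
    thus ?thesis using dominant pos by linarith
  qed simp
  have "s i * (s m / 2) powr (-q) \<le> 2 * s i powr (1 - q)"
  proof (cases "s i = 0")
    case False
    hence si: "0 < s i" using nonneg i by force
    have "s i * (s m / 2) powr (-q) \<le> s i * (s i / 2) powr (-q)"
      using \<open>s i \<le> s m\<close> si q by (intro mult_left_mono powr_mono2') auto
    also have "\<dots> = 2 powr q * s i powr (1 - q)"
      using si by (simp add: powr_divide powr_diff powr_minus field_simps)
    also have "\<dots> \<le> 2 * s i powr (1 - q)"
      using q powr_mono[of q 1 2] by (intro mult_right_mono) auto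
    finally show ?thesis .
  qed simp
  moreover have "epow (cmod ?S) (-q) \<le> ennreal ((s m / 2) powr (-q))"
    using S pos q unfolding epow_def by (auto intro!: ennreal_leI powr_mono2')
  ultimately show ?thesis
    using nonneg i by (auto simp flip: ennreal_mult intro: order_trans[OF mult_left_mono] ennreal_leI)
qed

lemma mult_powr_neg_le:
  fixes s t C q :: real
  assumes q: "0 < q" "q < 1" and s: "0 \<le> s" "s \<le> 1" "s \<le> C * t" and t: "0 < t" and C: "0 < C"
  shows "s * t powr (-q) \<le> C powr q"
proof (cases "s = 0")
  case False
  hence s0: "0 < s" using s by simp
  have "s * t powr (-q) = s powr (1 - q) * (s powr q * t powr (-q))"
    using s0 by (simp add: powr_diff powr_minus field_simps)
  also have "\<dots> \<le> 1 * ((C * t) powr q * t powr (-q))"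
  proof (intro mult_mono)
    show "s powr (1 - q) \<le> 1" using powr_mono2[of "1 - q" s 1] s q by simp
    show "s powr q \<le> (C * t) powr q" using s s0 q by (intro powr_mono2) auto
  qed auto
  also have "\<dots> = C powr q" using t C by (simp add: powr_mult powr_minus field_simps)
  finally show ?thesis .
qed (use C in simp)

lemma window_term_bound:
  assumes q: "0 < q" "q < 1" and si: "0 \<le> si" "si \<le> 1" "si \<le> C * sm" and sm: "0 < sm"
    and S: "sm * (\<delta> * \<bar>x - x0\<bar>) \<le> S" and \<delta>: "0 < \<delta>" and C: "0 < C"
  shows "ennreal si * epow S (-q) \<le> ennreal (C powr q * \<delta> powr (-q)) * epow \<bar>x - x0\<bar> (-q)"
proof (cases "x = x0")
  case True
  have "0 < C powr q * \<delta> powr (-q)" using C \<delta> by simp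
  hence "ennreal (C powr q * \<delta> powr (-q)) * epow \<bar>x - x0\<bar> (-q) = \<infinity>"
    using True q C \<delta> by (simp add: epow_def ennreal_mult_top)
  thus ?thesis by simp
next
  case False
  let ?d = "\<bar>x - x0\<bar>"
  have d: "0 < ?d" using False by simp
  have "0 < sm * (\<delta> * ?d)" using sm \<delta> d by simp
  hence "epow S (-q) \<le> ennreal ((sm * (\<delta> * ?d)) powr (-q))"
    using S q unfolding epow_def by (auto intro!: ennreal_leI powr_mono2')
  moreover have "si * sm powr (-q) \<le> C powr q" by (rule mult_powr_neg_le[OF q si sm C])
  ultimately have "ennreal si * epow S (-q) \<le> ennreal ((si * sm powr (-q)) * \<delta> powr (-q) * ?d powr (-q))"
    using si sm \<delta> d
    by (auto simp: powr_mult mult.assoc simp flip: ennreal_mult intro: order_trans[OF mult_left_mono])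
  also have "\<dots> \<le> ennreal (C powr q * \<delta> powr (-q) * ?d powr (-q))"
    using \<open>si * sm powr (-q) \<le> C powr q\<close> by (intro ennreal_leI mult_right_mono) auto
  also have "\<dots> = ennreal (C powr q * \<delta> powr (-q)) * epow ?d (-q)"
    using d C \<delta> by (simp add: epow_def ennreal_mult)
  finally show ?thesis .
qed

text \<open>phase_proj is Re (cis (- \<theta> (Suc m)) * soliton_sum a Z \<theta> k x) / soliton a (Z m) x, written out
  as a real sum so that it can be differentiated termwise.\<close>

definition phase_proj :: "real \<Rightarrow> (nat \<Rightarrow> real) \<Rightarrow> (nat \<Rightarrow> real) \<Rightarrow> nat \<Rightarrow> nat \<Rightarrow> real \<Rightarrow> real" where
  "phase_proj a Z \<theta> k m x = (\<Sum>j=1..k. cos (\<theta> j - \<theta> (Suc m)) * (soliton a (Z j) x / soliton a (Z m) x))"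

definition phase_proj' :: "real \<Rightarrow> (nat \<Rightarrow> real) \<Rightarrow> (nat \<Rightarrow> real) \<Rightarrow> nat \<Rightarrow> nat \<Rightarrow> real \<Rightarrow> real" where
  "phase_proj' a Z \<theta> k m x = (\<Sum>j=1..k. cos (\<theta> j - \<theta> (Suc m)) *
     (a * (tanh (x - Z m) - tanh (x - Z j)) * (soliton a (Z j) x / soliton a (Z m) x)))"

lemma soliton_ratio_has_real_derivative:
  "((\<lambda>x. soliton a zj x / soliton a zm x) has_real_derivative
     a * (tanh (x - zm) - tanh (x - zj)) * (soliton a zj x / soliton a zm x)) (at x)"
  using soliton_pos[of a zm x]
  by (auto intro!: derivative_eq_intros soliton_has_real_derivative[THEN DERIV_chain2] simp: field_simps)

lemma phase_proj_has_real_derivative: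
  "(phase_proj a Z \<theta> k m has_real_derivative phase_proj' a Z \<theta> k m x) (at x)"
  unfolding phase_proj_def[abs_def] phase_proj'_def
  by (intro DERIV_sum DERIV_cmult soliton_ratio_has_real_derivative)

lemma norm_soliton_sum_ge_phase_proj:
  "soliton a (Z m) x * \<bar>phase_proj a Z \<theta> k m x\<bar> \<le> cmod (soliton_sum a Z \<theta> k x)"
proof -
  have "Re (cis (- \<theta> (Suc m)) * (cis (\<theta> j) * complex_of_real (soliton a (Z j) x)))
      = cos (\<theta> j - \<theta> (Suc m)) * soliton a (Z j) x" for j
  proof -
    have "cis (- \<theta> (Suc m)) * (cis (\<theta> j) * complex_of_real (soliton a (Z j) x))
        = cis (\<theta> j - \<theta> (Suc m)) * complex_of_real (soliton a (Z j) x)"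
      by (simp add: mult.assoc[symmetric] cis_mult)
    thus ?thesis by (simp only:) simp
  qed
  hence "Re (cis (- \<theta> (Suc m)) * soliton_sum a Z \<theta> k x) = (\<Sum>j=1..k. cos (\<theta> j - \<theta> (Suc m)) * soliton a (Z j) x)"
    unfolding soliton_sum_def sum_distrib_left Re_sum by (intro sum.cong) auto
  also have "\<dots> = soliton a (Z m) x * phase_proj a Z \<theta> k m x"
    unfolding phase_proj_def using soliton_pos[of a "Z m" x] by (simp add: sum_distrib_left field_simps)
  finally have "soliton a (Z m) x * \<bar>phase_proj a Z \<theta> k m x\<bar> = \<bar>Re (cis (- \<theta> (Suc m)) * soliton_sum a Z \<theta> k x)\<bar>"
    using soliton_pos[of a "Z m" x] by (simp add: abs_mult)
  also have "\<dots> \<le> cmod (cis (- \<theta> (Suc m)) * soliton_sum a Z \<theta> k x)" by (rule abs_Re_le_cmod)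
  finally show ?thesis by (simp add: norm_mult)
qed

text \<open>The two smallness conditions: outside the windows around the midpoints the nearest soliton
  dominates the sum of all others, and inside a window the derivative of the phase projection is
  governed by the (m+1)-st soliton.\<close>

locale well_separated_solitons =
  fixes a q L E :: real and k :: nat
  assumes q: "0 < q" "q < 1" and a: "1 \<le> a" "a * (1 - q) = 2" and k: "2 \<le> k"
    and L: "0 < L" "2 * L + 2 \<le> E"
    and dominance: "2 * real k * (2 powr a * exp (-a * (2 * L))) \<le> 1"
    and slope_dominance: "2 powr a * exp (-a * (E - 2 * L)) * (4 * real k) \<le> exp (-a * (2 * L)) / 2 powr a"
begin

definition window :: "(nat \<Rightarrow> real) \<Rightarrow> nat \<Rightarrow> real set" where
  "window Z m = {(Z m + Z (Suc m)) / 2 - L .. (Z m + Z (Suc m)) / 2 + L}"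

definition slope :: real where
  "slope = a * (exp (-a * (2 * L)) / 2 powr a) / 2"

definition window_constant :: real where
  "window_constant = (2 powr a * exp (a * (2 * L))) powr q * slope powr (-q)"

definition window_bound :: real where
  "window_bound = window_constant * (2 * ((2 * L) powr (1 - q) / (1 - q)))"

lemma mem_window_iff: "x \<in> window Z m \<longleftrightarrow> \<bar>x - (Z m + Z (Suc m)) / 2\<bar> \<le> L"
  unfolding window_def by (auto simp: abs_le_iff)

lemma slope_pos: "0 < slope"
  using a unfolding slope_def by simp

lemma phase_proj'_term_next_ge:
  assumes sep: "separated Z k E" and m: "1 \<le> m" "m < k" and x: "x \<in> window Z m"
  shows "a * (exp (-a * (2 * L)) / 2 powr a) \<le> cos (\<theta> (Suc m) - \<theta> (Suc m)) *
           (a * (tanh (x - Z m) - tanh (x - Z (Suc m))) * (soliton a (Z (Suc m)) x / soliton a (Z m) x))"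
proof -
  note W = separated_window[OF sep m L x[unfolded mem_window_iff]]
  have "exp (-a * (2 * L)) / 2 powr a * soliton a (Z m) x \<le> soliton a (Z (Suc m)) x"
    using a W(3) by (intro soliton_ge_if_nearer) auto
  hence ratio: "exp (-a * (2 * L)) / 2 powr a \<le> soliton a (Z (Suc m)) x / soliton a (Z m) x"
    using soliton_pos[of a "Z m" x] by (simp add: field_simps)
  have "1/2 \<le> tanh (x - Z m)" using W(1) by (intro tanh_ge_half)
  moreover have "1/2 \<le> tanh (Z (Suc m) - x)" using W(2) by (intro tanh_ge_half)
  moreover have "tanh (x - Z (Suc m)) = - tanh (Z (Suc m) - x)"
    by (metis minus_diff_eq tanh_minus)
  ultimately have "1 \<le> tanh (x - Z m) - tanh (x - Z (Suc m))" by linarith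
  hence "exp (-a * (2 * L)) / 2 powr a
      \<le> (tanh (x - Z m) - tanh (x - Z (Suc m))) * (soliton a (Z (Suc m)) x / soliton a (Z m) x)"
    using ratio soliton_pos[of a] by (smt (verit) divide_pos_pos mult_le_cancel_right1)
  hence "a * (exp (-a * (2 * L)) / 2 powr a)
      \<le> a * ((tanh (x - Z m) - tanh (x - Z (Suc m))) * (soliton a (Z (Suc m)) x / soliton a (Z m) x))"
    using a by (intro mult_left_mono) auto
  thus ?thesis by (simp only: diff_self cos_zero mult_1_left mult.assoc)
qed

lemma phase_proj'_term_other_ge:
  assumes sep: "separated Z k E" and m: "1 \<le> m" "m < k" and x: "x \<in> window Z m"
    and j: "j \<in> {1..k}" "j \<noteq> Suc m"
  shows "- (2 * a * (2 powr a * exp (-a * (E - 2 * L)))) \<le> cos (\<theta> j - \<theta> (Suc m)) *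
           (a * (tanh (x - Z m) - tanh (x - Z j)) * (soliton a (Z j) x / soliton a (Z m) x))"
proof (cases "j = m")
  case False
  note W = separated_window[OF sep m L x[unfolded mem_window_iff]]
  define r where "r = soliton a (Z j) x / soliton a (Z m) x"
  define B where "B = 2 powr a * exp (-a * (E - 2 * L))"
  have "soliton a (Z j) x \<le> B * soliton a (Z m) x"
    unfolding B_def using a j False by (intro soliton_le_if_farther W(5)) auto
  hence r: "0 < r" "r \<le> B"
    unfolding r_def using soliton_pos[of a "Z m" x] soliton_pos[of a "Z j" x] by (simp_all add: field_simps)
  have "\<bar>tanh (x - Z m) - tanh (x - Z j)\<bar> \<le> 2"
    using tanh_real_bounds[of "x - Z m"] tanh_real_bounds[of "x - Z j"] by auto
  hence "\<bar>cos (\<theta> j - \<theta> (Suc m)) * (a * (tanh (x - Z m) - tanh (x - Z j)) * r)\<bar> \<le> 1 * ((a * 2) * B)"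
    unfolding abs_mult using a r by (intro mult_mono) auto
  thus ?thesis unfolding r_def[symmetric] B_def[symmetric] by linarith
qed (use a in simp)

lemma phase_proj'_ge_slope:
  assumes sep: "separated Z k E" and m: "1 \<le> m" "m < k" and x: "x \<in> window Z m"
  shows "slope \<le> phase_proj' a Z \<theta> k m x"
proof -
  let ?T = "\<lambda>j. cos (\<theta> j - \<theta> (Suc m)) *
    (a * (tanh (x - Z m) - tanh (x - Z j)) * (soliton a (Z j) x / soliton a (Z m) x))"
  let ?B = "2 powr a * exp (-a * (E - 2 * L))"
  have "Suc m \<in> {1..k}" using m by auto
  hence split: "phase_proj' a Z \<theta> k m x = ?T (Suc m) + (\<Sum>j\<in>{1..k} - {Suc m}. ?T j)"
    unfolding phase_proj'_def by (rule sum.remove[OF finite_atLeastAtMost])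
  have "- (2 * a * ?B * real k) \<le> (\<Sum>j\<in>{1..k} - {Suc m}. - (2 * a * ?B))"
    using card_Diff1_le[of "{1..k}" "Suc m"] a
    by (simp add: mult_right_mono mult_nonneg_nonneg)
  also have "\<dots> \<le> (\<Sum>j\<in>{1..k} - {Suc m}. ?T j)"
    using phase_proj'_term_other_ge[OF sep m x] by (intro sum_mono) auto
  finally have others: "- (2 * a * ?B * real k) \<le> (\<Sum>j\<in>{1..k} - {Suc m}. ?T j)" .
  have "a * (?B * (4 * real k)) \<le> a * (exp (-a * (2 * L)) / 2 powr a)"
    using slope_dominance a by (intro mult_left_mono) auto
  moreover have "2 * a * ?B * real k = a * (?B * (4 * real k)) / 2" by (simp add: field_simps)
  ultimately show ?thesis
    using split others phase_proj'_term_next_ge[OF sep m x, of \<theta>] unfolding slope_def by argo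
qed

lemma phase_proj_linear_growth:
  assumes sep: "separated Z k E" and m: "1 \<le> m" "m < k"
  obtains x0 where "x0 \<in> window Z m"
    "\<And>x. x \<in> window Z m \<Longrightarrow> slope * \<bar>x - x0\<bar> \<le> \<bar>phase_proj a Z \<theta> k m x\<bar>"
proof -
  let ?lo = "(Z m + Z (Suc m)) / 2 - L" and ?hi = "(Z m + Z (Suc m)) / 2 + L"
  have cont: "continuous_on {?lo..?hi} (phase_proj a Z \<theta> k m)"
    using phase_proj_has_real_derivative by (intro continuous_at_imp_continuous_on ballI DERIV_isCont) blast
  have inc: "slope * (y - x) \<le> phase_proj a Z \<theta> k m y - phase_proj a Z \<theta> k m x"
    if "?lo \<le> x" "x \<le> y" "y \<le> ?hi" for x y
    using that phase_proj'_ge_slope[OF sep m] unfolding window_def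
    by (intro increment_ge_if_deriv_ge[OF phase_proj_has_real_derivative]) auto
  obtain x0 where "x0 \<in> {?lo..?hi}"
    "\<And>x. x \<in> {?lo..?hi} \<Longrightarrow> slope * \<bar>x - x0\<bar> \<le> \<bar>phase_proj a Z \<theta> k m x\<bar>"
    by (rule abs_ge_dist_if_increment_ge[OF _ cont _ inc]) (use slope_pos L in auto)
  thus ?thesis using that unfolding window_def by blast
qed

lemma soliton_integrand_le_sech_sq_off_windows:
  assumes sep: "separated Z k E" and i: "i \<in> {1..k}"
    and outside: "\<And>m. 1 \<le> m \<Longrightarrow> m < k \<Longrightarrow> x \<notin> window Z m"
  shows "soliton_integrand a (-q) Z \<theta> k i x
         \<le> 2 * ennreal (1 / cosh (x - Z i) ^ 2)"
proof -
  have far: "L \<le> \<bar>x - (Z m + Z (Suc m)) / 2\<bar>" if "1 \<le> m" "m < k" for m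
    using outside[OF that] unfolding mem_window_iff by simp
  obtain m where m: "m \<in> {1..k}"
    and nearest: "\<And>j. j \<in> {1..k} \<Longrightarrow> j \<noteq> m \<Longrightarrow> \<bar>x - Z m\<bar> + 2 * L \<le> \<bar>x - Z j\<bar>"
    by (rule separated_nearest_center[OF sep _ L(1) _ far]) (use k L in auto)
  define K where "K = 2 powr a * exp (-a * (2 * L))"
  have "(\<Sum>j\<in>{1..k} - {m}. soliton a (Z j) x) \<le> (\<Sum>j\<in>{1..k} - {m}. K * soliton a (Z m) x)"
    unfolding K_def using a nearest by (intro sum_mono soliton_le_if_farther) auto
  also have "\<dots> \<le> real k * (K * soliton a (Z m) x)"
    using card_Diff1_le[of "{1..k}" m] soliton_pos[of a "Z m" x] unfolding K_def
    by (simp add: mult_right_mono)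
  finally have "2 * (\<Sum>j\<in>{1..k} - {m}. soliton a (Z j) x) \<le> (2 * real k * K) * soliton a (Z m) x"
    by simp
  also have "\<dots> \<le> soliton a (Z m) x"
    using dominance soliton_pos[of a "Z m" x] unfolding K_def by (simp add: mult_left_le_one_le)
  finally have dom: "2 * (\<Sum>j\<in>{1..k} - {m}. soliton a (Z j) x) \<le> soliton a (Z m) x" .
  have "ennreal (soliton a (Z i) x) * epow (cmod (soliton_sum a Z \<theta> k x)) (-q)
      \<le> ennreal (2 * soliton a (Z i) x powr (1 - q))"
    unfolding soliton_sum_def
    by (rule dominant_term_bound[where s = "\<lambda>j. soliton a (Z j) x", OF _ m i _ soliton_pos dom q])
      (auto intro: less_imp_le soliton_pos)
  also have "\<dots> = ennreal 2 * ennreal (1 / cosh (x - Z i) ^ 2)"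
    unfolding soliton_powr_eq_sech_sq[OF a(2)] by (rule ennreal_mult) auto
  finally show ?thesis unfolding soliton_integrand_def by simp
qed

lemma soliton_integrand_le_near_window:
  assumes sep: "separated Z k E" and i: "i \<in> {1..k}" and m: "1 \<le> m" "m < k"
    and x: "x \<in> window Z m" and growth: "slope * \<bar>x - x0\<bar> \<le> \<bar>phase_proj a Z \<theta> k m x\<bar>"
  shows "soliton_integrand a (-q) Z \<theta> k i x
         \<le> ennreal window_constant * epow \<bar>x - x0\<bar> (-q)"
  unfolding window_constant_def soliton_integrand_def
proof (rule window_term_bound[OF q])
  note W = separated_window[OF sep m L x[unfolded mem_window_iff]]
  show "soliton a (Z i) x \<le> 2 powr a * exp (a * (2 * L)) * soliton a (Z m) x"
    using soliton_le_if_farther[OF _ W(4)[OF i]] a by simp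
  show "soliton a (Z m) x * (slope * \<bar>x - x0\<bar>) \<le> cmod (soliton_sum a Z \<theta> k x)"
    using growth soliton_pos[of a "Z m" x]
    by (intro order_trans[OF mult_left_mono norm_soliton_sum_ge_phase_proj]) auto
qed (use soliton_pos soliton_le_1 a slope_pos in \<open>auto intro: less_imp_le\<close>)

lemma nn_integral_window_le:
  assumes sep: "separated Z k E" and i: "i \<in> {1..k}" and m: "1 \<le> m" "m < k"
  shows "(\<integral>\<^sup>+x. indicator (window Z m) x * soliton_integrand a (-q) Z \<theta> k i x \<partial>lborel)
         \<le> ennreal window_bound"
proof -
  obtain x0 where x0: "x0 \<in> window Z m"
    and growth: "\<And>x. x \<in> window Z m \<Longrightarrow> slope * \<bar>x - x0\<bar> \<le> \<bar>phase_proj a Z \<theta> k m x\<bar>"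
    using phase_proj_linear_growth[OF sep m] by blast
  have "window Z m \<subseteq> {x0 - 2 * L..x0 + 2 * L}"
    using x0 unfolding window_def by (auto simp: subset_iff)
  hence "indicator (window Z m) x * soliton_integrand a (-q) Z \<theta> k i x
      \<le> ennreal window_constant * (indicator {x0 - 2 * L..x0 + 2 * L} x * epow \<bar>x - x0\<bar> (-q))" for x
    using soliton_integrand_le_near_window[OF sep i m _ growth]
    by (cases "x \<in> window Z m") (auto simp: indicator_def subset_iff)
  hence "(\<integral>\<^sup>+x. indicator (window Z m) x * soliton_integrand a (-q) Z \<theta> k i x \<partial>lborel)
      \<le> ennreal window_constant * (\<integral>\<^sup>+x. indicator {x0 - 2 * L..x0 + 2 * L} x * epow \<bar>x - x0\<bar> (-q) \<partial>lborel)"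
    by (subst nn_integral_cmult[symmetric]) (auto intro: nn_integral_mono)
  also have "\<dots> \<le> ennreal window_constant * ennreal (2 * ((2 * L) powr (1 - q) / (1 - q)))"
    using q L by (intro mult_left_mono nn_integral_epow_window) auto
  also have "\<dots> = ennreal window_bound"
    unfolding window_bound_def
    by (rule ennreal_mult[symmetric]) (use q L in \<open>auto simp: window_constant_def\<close>)
  finally show ?thesis .
qed

lemma soliton_integrand_le_sech_sq_plus_windows:
  assumes sep: "separated Z k E" and i: "i \<in> {1..k}"
  shows "soliton_integrand a (-q) Z \<theta> k i x
         \<le> 2 * ennreal (1 / cosh (x - Z i) ^ 2)
           + (\<Sum>m\<in>{1..<k}. indicator (window Z m) x * soliton_integrand a (-q) Z \<theta> k i x)"
proof (cases "\<exists>m\<in>{1..<k}. x \<in> window Z m")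
  case True
  then obtain m where m: "m \<in> {1..<k}" and x: "x \<in> window Z m" by blast
  have "soliton_integrand a (-q) Z \<theta> k i x = indicator (window Z m) x * soliton_integrand a (-q) Z \<theta> k i x"
    using x by simp
  also have "\<dots> \<le> (\<Sum>m\<in>{1..<k}. indicator (window Z m) x * soliton_integrand a (-q) Z \<theta> k i x)"
    by (rule member_le_sum[OF m]) auto
  finally show ?thesis by (rule add_increasing[OF zero_le])
next
  case False
  hence "soliton_integrand a (-q) Z \<theta> k i x \<le> 2 * ennreal (1 / cosh (x - Z i) ^ 2)"
    by (intro soliton_integrand_le_sech_sq_off_windows[OF sep i]) auto
  thus ?thesis by (rule add_increasing2[OF zero_le])
qed

lemma soliton_integral_le:
  assumes sep: "separated Z k E" and i: "i \<in> {1..k}"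
  shows "soliton_integral a (-q) Z \<theta> k i
         \<le> ennreal (4 + real k * window_bound)"
proof -
  let ?f = "soliton_integrand a (-q) Z \<theta> k i"
  have W: "0 \<le> window_bound" unfolding window_bound_def window_constant_def using q L by simp
  have [measurable]: "(\<lambda>x. indicator (window Z m) x * ?f x) \<in> borel_measurable lborel" for m
    unfolding window_def by measurable
  have "soliton_integral a (-q) Z \<theta> k i
      \<le> (\<integral>\<^sup>+x. 2 * ennreal (1 / cosh (x - Z i) ^ 2) + (\<Sum>m\<in>{1..<k}. indicator (window Z m) x * ?f x) \<partial>lborel)"
    unfolding soliton_integral_def
    by (intro nn_integral_mono soliton_integrand_le_sech_sq_plus_windows[OF sep i])
  also have "\<dots> = (\<integral>\<^sup>+x. 2 * ennreal (1 / cosh (x - Z i) ^ 2) \<partial>lborel)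
        + (\<integral>\<^sup>+x. (\<Sum>m\<in>{1..<k}. indicator (window Z m) x * ?f x) \<partial>lborel)"
    by (rule nn_integral_add) measurable
  also have "(\<integral>\<^sup>+x. 2 * ennreal (1 / cosh (x - Z i) ^ 2) \<partial>lborel) = 4"
    using nn_integral_sech_sq_scaled[of 1 "Z i"] by (simp add: nn_integral_cmult)
  also have "(\<integral>\<^sup>+x. (\<Sum>m\<in>{1..<k}. indicator (window Z m) x * ?f x) \<partial>lborel)
      = (\<Sum>m\<in>{1..<k}. \<integral>\<^sup>+x. indicator (window Z m) x * ?f x \<partial>lborel)"
    by (rule nn_integral_sum) measurable
  also have "\<dots> \<le> (\<Sum>m\<in>{1..<k}. ennreal window_bound)"
    using nn_integral_window_le[OF sep i] by (intro sum_mono) auto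
  also have "\<dots> \<le> ennreal (real k * window_bound)"
    using W by (simp add: ennreal_of_nat_eq_real_of_nat ennreal_mult' mult_right_mono)
  also have "4 + ennreal (real k * window_bound) = ennreal (4 + real k * window_bound)" using W by (simp add: ennreal_plus)
  finally show ?thesis by (simp add: add_left_mono)
qed

end

lemma log_window_dominance:
  assumes a: "1 \<le> a" and k: "1 \<le> k"
  shows "2 * real k * (2 powr a * exp (-a * (2 * ln (4 * real k)))) \<le> 1"
proof -
  define b where "b = 2 * exp (-2 * ln (4 * real k))"
  have y: "0 < 4 * real k" using k by simp
  have "exp (2 * ln (4 * real k)) = (4 * real k) ^ 2"
    using ln_realpow[of "4 * real k" 2] exp_ln[of "(4 * real k) ^ 2"] y by simp
  hence "exp (-2 * ln (4 * real k)) = 1 / (4 * real k) ^ 2"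
    by (simp add: exp_minus inverse_eq_divide)
  hence b: "b = 1 / (8 * real k ^ 2)" unfolding b_def by (simp add: power2_eq_square)
  have "2 * real k \<le> 8 * real k ^ 2"
    using k mult_right_mono[of 1 "real k" "real k"] by (simp add: power2_eq_square)
  hence b_le: "b \<le> 1 / (2 * real k)" unfolding b using k by (intro divide_left_mono) auto
  have "2 powr a * exp (-a * (2 * ln (4 * real k))) = b powr a"
    unfolding b_def by (simp add: powr_mult exp_powr_real algebra_simps)
  also have "\<dots> \<le> b"
  proof (rule powr_le_one_le)
    show "0 < b" unfolding b_def by simp
    show "b \<le> 1" using b_le k by (smt (verit) le_divide_eq_1_pos of_nat_1 of_nat_mono)
  qed (use a in simp)
  finally have "2 * real k * (2 powr a * exp (-a * (2 * ln (4 * real k)))) \<le> 2 * real k * b"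
    by (intro mult_left_mono) auto
  also have "\<dots> \<le> 1" using b_le k by (simp add: field_simps)
  finally show ?thesis .
qed

lemma log_window_slope_dominance:
  assumes a: "1 \<le> a" and k: "1 \<le> k" and E: "4 * L + ln (16 * real k) \<le> E"
  shows "2 powr a * exp (-a * (E - 2 * L)) * (4 * real k) \<le> exp (-a * (2 * L)) / 2 powr a"
proof -
  define b where "b = 4 * exp (-(E - 4 * L))"
  have "exp (-(E - 4 * L)) \<le> exp (- ln (16 * real k))" using E by simp
  also have "\<dots> = 1 / (16 * real k)" using k by (simp add: exp_minus inverse_eq_divide)
  finally have b_le: "b * (4 * real k) \<le> 1" unfolding b_def using k by (simp add: field_simps)
  hence "b \<le> 1" using k by (smt (verit) b_def exp_gt_zero mult_le_cancel_left1 of_nat_1 of_nat_mono)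
  have "2 powr (a * 2) = (4::real) powr a" using powr_powr[of 2 2 a] by (simp add: mult.commute)
  hence "2 powr a * exp (-a * (E - 2 * L)) * (4 * real k) = (b powr a * (4 * real k)) * (exp (-a * (2 * L)) / 2 powr a)"
    unfolding b_def by (simp add: powr_mult exp_powr_real field_simps flip: exp_add powr_add)
  also have "\<dots> \<le> (b * (4 * real k)) * (exp (-a * (2 * L)) / 2 powr a)"
    using powr_le_one_le[of b a] \<open>b \<le> 1\<close> a unfolding b_def by (intro mult_right_mono) auto
  also have "\<dots> \<le> exp (-a * (2 * L)) / 2 powr a"
    using b_le unfolding b_def by (intro mult_left_le_one_le) auto
  finally show ?thesis .
qed

lemma well_separated_solitons_log_window:
  assumes p: "1 < p" "p < 2" and k: "2 \<le> k"
  shows "well_separated_solitons (2 / (p - 1)) (2 - p) (ln (4 * real k))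
           (4 * ln (4 * real k) + ln (16 * real k) + 2) k"
proof
  show a: "1 \<le> 2 / (p - 1)" using p by (simp add: field_simps)
  show "2 / (p - 1) * (1 - (2 - p)) = 2" using p by (simp add: field_simps)
  have "0 < ln (4 * real k)" "0 < ln (16 * real k)" using k by simp_all
  thus "0 < ln (4 * real k)" "2 * ln (4 * real k) + 2 \<le> 4 * ln (4 * real k) + ln (16 * real k) + 2"
    by simp_all
  show "2 * real k * (2 powr (2 / (p - 1)) * exp (- (2 / (p - 1)) * (2 * ln (4 * real k)))) \<le> 1"
    using log_window_dominance[OF a] k by simp
  show "2 powr (2 / (p - 1)) * exp (- (2 / (p - 1)) * (4 * ln (4 * real k) + ln (16 * real k) + 2 - 2 * ln (4 * real k)))
        * (4 * real k) \<le> exp (- (2 / (p - 1)) * (2 * ln (4 * real k))) / 2 powr (2 / (p - 1))"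
    using k by (intro log_window_slope_dominance[OF a]) auto
qed (use p k in auto)

lemma soliton_integral_bounded_lt_2:
  assumes p: "1 < p" "p < 2" and k: "2 \<le> k"
  obtains E C where "0 < E" "0 < C"
    "\<And>Z \<theta> i. separated Z k E \<Longrightarrow> i \<in> {1..k} \<Longrightarrow> soliton_integral (2 / (p - 1)) (p - 2) Z \<theta> k i \<le> ennreal C"
proof -
  interpret well_separated_solitons "2 / (p - 1)" "2 - p" "ln (4 * real k)"
    "4 * ln (4 * real k) + ln (16 * real k) + 2" k
    by (rule well_separated_solitons_log_window[OF p k])
  define C where "C = 4 + real k * window_bound"
  show ?thesis
  proof (rule that[of "4 * ln (4 * real k) + ln (16 * real k) + 2" C])
    show "0 < 4 * ln (4 * real k) + ln (16 * real k) + 2" using L by linarith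
    show "0 < C" unfolding C_def window_bound_def window_constant_def using L q by (simp add: add_pos_nonneg)
    fix Z \<theta> i assume "separated Z k (4 * ln (4 * real k) + ln (16 * real k) + 2)" "i \<in> {1..k}"
    from soliton_integral_le[OF this, of \<theta>]
    show "soliton_integral (2 / (p - 1)) (p - 2) Z \<theta> k i \<le> ennreal C" unfolding C_def by simp
  qed
qed

lemma soliton_integral_bounded:
  assumes p: "1 < p" and k: "2 \<le> k"
  obtains E C where "0 < E" "0 < C"
    "\<And>Z \<theta> i. separated Z k E \<Longrightarrow> i \<in> {1..k} \<Longrightarrow> soliton_integral (2 / (p - 1)) (p - 2) Z \<theta> k i \<le> ennreal C"
proof (cases "p < 2")
  case True
  then show ?thesis using soliton_integral_bounded_lt_2 p k that by blast
next
  case False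
  show ?thesis
  proof (rule that[of 1])
    show "0 < real k powr (p - 2) * 2 powr (2 / (p - 1)) * (4 / (2 / (p - 1)))" using p k by simp
    show "soliton_integral (2 / (p - 1)) (p - 2) Z \<theta> k i
        \<le> ennreal (real k powr (p - 2) * 2 powr (2 / (p - 1)) * (4 / (2 / (p - 1))))" for Z \<theta> i
      using False p k by (intro soliton_integral_le_of_nonneg) auto
  qed simp
qed

section \<open>Undoing the substitution y = tanh x\<close>

lemma kappa0_pos: "1 < p \<Longrightarrow> 0 < kappa0 p"
  unfolding kappa0_def by simp

lemma measurable_kappa [measurable]: "(\<lambda>y. kappa p d y) \<in> borel_measurable borel"
  unfolding kappa_def by measurable

lemma kappa_tanh:
  assumes p: "1 < p"
  shows "kappa p (- tanh z) (tanh x) = kappa0 p * cosh x powr (2 / (p - 1)) * soliton (2 / (p - 1)) z x"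
proof -
  have "1 - (- tanh z) ^ 2 = 1 / cosh z ^ 2" using one_minus_tanh_sq[of z] by simp
  moreover have "1 + (- tanh z) * tanh x = cosh (x - z) / (cosh x * cosh z)"
    unfolding tanh_def cosh_diff by (simp add: field_simps)
  moreover have "(1 / cosh z ^ 2) powr (1 / (p - 1)) * (cosh (x - z) / (cosh x * cosh z)) powr (-2 / (p - 1))
      = cosh x powr (2 / (p - 1)) * cosh (x - z) powr (- (2 / (p - 1)))"
    using p by (simp add: powr_def ln_div ln_mult ln_realpow field_simps flip: exp_add)
  ultimately show ?thesis unfolding kappa_def soliton_def by (simp add: mult.assoc)
qed

lemma kappa_integrand_tanh:
  assumes p: "1 < p"
  shows "ennreal (kappa p (- tanh (Z i)) (tanh x)) *
           epow (cmod (\<Sum>j=1..k. cis (\<theta> j) * complex_of_real (kappa p (- tanh (Z j)) (tanh x)))) (p - 2)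
         * ennreal (1 - tanh x ^ 2)
       = ennreal (kappa0 p powr (p - 1)) * soliton_integrand (2 / (p - 1)) (p - 2) Z \<theta> k i x"
proof -
  define a where "a = 2 / (p - 1)"
  define w where "w = kappa0 p * cosh x powr a"
  define S where "S = soliton_sum a Z \<theta> k x"
  have w: "0 < w" unfolding w_def using kappa0_pos[OF p] by simp
  have "(\<Sum>j=1..k. cis (\<theta> j) * complex_of_real (kappa p (- tanh (Z j)) (tanh x))) = complex_of_real w * S"
    unfolding S_def soliton_sum_def w_def a_def kappa_tanh[OF p] sum_distrib_left
    by (intro sum.cong refl) (simp add: mult_ac)
  hence "epow (cmod (\<Sum>j=1..k. cis (\<theta> j) * complex_of_real (kappa p (- tanh (Z j)) (tanh x)))) (p - 2)
      = ennreal (w powr (p - 2)) * epow (cmod S) (p - 2)"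
    using w by (simp add: norm_mult epow_mult)
  moreover have "kappa p (- tanh (Z i)) (tanh x) = w * soliton a (Z i) x"
    unfolding w_def a_def kappa_tanh[OF p] by simp
  moreover have "w * w powr (p - 2) * (1 - tanh x ^ 2) = kappa0 p powr (p - 1)"
  proof -
    have "w * w powr (p - 2) = w powr (p - 1)" using w powr_add[of w 1 "p - 2"] by simp
    also have "\<dots> = kappa0 p powr (p - 1) * cosh x ^ 2"
    proof -
      have "a * (p - 1) = 2" unfolding a_def using p by (simp add: field_simps)
      thus ?thesis unfolding w_def using kappa0_pos[OF p] by (simp add: powr_mult powr_powr powr_numeral)
    qed
    finally show ?thesis by (simp add: one_minus_tanh_sq)
  qed
  moreover have "ennreal (w * s) * (ennreal (w powr (p - 2)) * e) * ennreal (1 - tanh x ^ 2)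
      = ennreal (w * w powr (p - 2) * (1 - tanh x ^ 2)) * (ennreal s * e)" if "0 \<le> s" for s e
  proof -
    have "0 \<le> w powr (p - 2)" "0 \<le> 1 - tanh x ^ 2" by (simp_all add: one_minus_tanh_sq)
    thus ?thesis using w that by (simp add: ennreal_mult mult_nonneg_nonneg mult_ac)
  qed
  ultimately show ?thesis
    using soliton_pos[of a "Z i" x] unfolding S_def a_def[symmetric] soliton_integrand_def
    by (simp only: less_imp_le)
qed

lemma nn_integral_kappa_eq_soliton_integral:
  assumes p: "1 < p"
  shows "(\<integral>\<^sup>+ y. indicator {-1<..<1} y * ennreal (kappa p (- tanh (Z i)) y)
            * epow (cmod (\<Sum>j=1..k. cis (\<theta> j) * complex_of_real (kappa p (- tanh (Z j)) y))) (p - 2) \<partial>lborel)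
       = ennreal (kappa0 p powr (p - 1)) * soliton_integral (2 / (p - 1)) (p - 2) Z \<theta> k i"
proof -
  define f where "f y = ennreal (kappa p (- tanh (Z i)) y)
    * epow (cmod (\<Sum>j=1..k. cis (\<theta> j) * complex_of_real (kappa p (- tanh (Z j)) y))) (p - 2)" for y
  have "(\<integral>\<^sup>+ y. indicator {-1<..<1} y * ennreal (kappa p (- tanh (Z i)) y)
            * epow (cmod (\<Sum>j=1..k. cis (\<theta> j) * complex_of_real (kappa p (- tanh (Z j)) y))) (p - 2) \<partial>lborel)
      = (\<integral>\<^sup>+ y. indicator {-1<..<1} y * f y \<partial>lborel)"
    unfolding f_def by (simp add: mult.assoc)
  also have "\<dots> = (\<integral>\<^sup>+x. f (tanh x) * ennreal (1 - tanh x ^ 2) \<partial>lborel)"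
    by (rule nn_integral_tanh_substitution) (simp add: f_def)
  also have "\<dots> = ennreal (kappa0 p powr (p - 1)) * soliton_integral (2 / (p - 1)) (p - 2) Z \<theta> k i"
    unfolding f_def kappa_integrand_tanh[OF p] soliton_integral_def by (rule nn_integral_cmult) simp
  finally show ?thesis .
qed

theorem mainTheorem6:
  fixes p :: real and k :: nat
  assumes "p > 1" and "k \<ge> 2"
  shows "\<exists>E>0. \<exists>C>0. \<forall>(\<zeta>::nat \<Rightarrow> real) (\<theta>::nat \<Rightarrow> real).
           (\<forall>j\<in>{1..<k}. \<zeta> j < \<zeta> (Suc j) \<and> \<zeta> (Suc j) - \<zeta> j \<ge> E) \<longrightarrow>
           (\<forall>i\<in>{1..k}.
              (\<integral>\<^sup>+ y. indicator {-1<..<1} y * ennreal (kappa p (- tanh (\<zeta> i)) y)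
                   * epow (cmod (\<Sum>j=1..k. cis (\<theta> j) * complex_of_real (kappa p (- tanh (\<zeta> j)) y))) (p - 2)
                 \<partial>lborel) \<le> ennreal C)"
proof -
  obtain E C where E: "0 < E" and C: "0 < C"
    and bound: "\<And>Z \<theta> i. separated Z k E \<Longrightarrow> i \<in> {1..k} \<Longrightarrow> soliton_integral (2 / (p - 1)) (p - 2) Z \<theta> k i \<le> ennreal C"
    using soliton_integral_bounded[OF assms] by blast
  have "(\<integral>\<^sup>+ y. indicator {-1<..<1} y * ennreal (kappa p (- tanh (\<zeta> i)) y)
          * epow (cmod (\<Sum>j=1..k. cis (\<theta> j) * complex_of_real (kappa p (- tanh (\<zeta> j)) y))) (p - 2) \<partial>lborel)
        \<le> ennreal (kappa0 p powr (p - 1) * C)"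
    if gaps: "\<forall>j\<in>{1..<k}. \<zeta> j < \<zeta> (Suc j) \<and> \<zeta> (Suc j) - \<zeta> j \<ge> E" and i: "i \<in> {1..k}" for \<zeta> \<theta> i
  proof -
    have "separated \<zeta> k E" using gaps E by (intro separatedI) auto
    with bound i show ?thesis
      unfolding nn_integral_kappa_eq_soliton_integral[OF assms(1)] using kappa0_pos[OF assms(1)] C
      by (simp add: ennreal_mult mult_left_mono)
  qed
  moreover have "0 < kappa0 p powr (p - 1) * C" using kappa0_pos[OF assms(1)] C by simp
  ultimately show ?thesis using E by blast
qed

end
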